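(* Let $\{\Omega_n\}_{n\ge1}$ be open convex subdomains of $\Omega$ such that for every $\delta>0$ there is $N(\delta)$ with $\overline{\Omega_\delta}\subset\Omega_n\subset\Omega$ for all $n\ge N(\delta)$, and let $v_n\in W^+(\Omega_n)$. Assume: (i) there is $v_0\in W^+(\Omega)$ with $\lim_{n\to\infty}v_n(\boldsymbol{x})=v_0(\boldsymbol{x})$ for every $\boldsymbol{x}\in\Omega$; (ii) for each $n$, the border $b_n$ of $v_n$ (a function on $\partial\Omega_n$, $b_n(\boldsymbol{y})=\liminf_{\Omega_n\ni\boldsymbol{x}\to\boldsymbol{y}}v_n(\boldsymbol{x})$) is real-valued and continuous on $\partial\Omega_n$; (iii) there is $\tilde b\in C^0(\partial\Omega)$ such that the graphs $\boldsymbol{S}_n=\{(\boldsymbol{x},b_n(\boldsymbol{x})):\boldsymbol{x}\in\partial\Omega_n\}$ have topological limit $\lim^T_{n\to\infty}\boldsymbol{S}_n=\tilde{\boldsymbol{S}}$, where $\tilde{\boldsymbol{S}}=\{(\boldsymbol{x},\tilde b(\boldsymbol{x})):\boldsymbol{x}\in\partial\Omega\}$. Let $b_0$ be the border of $v_0$, $b_0(\boldsymbol{x})=\liminf_{\Omega\ni\boldsymbol{x}'\to\boldsymbol{x}}v_0(\boldsymbol{x}')$. Then $b_0(\boldsymbol{x})\le\tilde b(\boldsymbol{x})$ for all $\boldsymbol{x}\in\partial\Omega$.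
   Context: $\Omega\subset\mathbb{R}^d$ is a bounded open convex domain; for an open convex set $U$, $W^+(U)$ denotes the set of convex real-valued functions on $U$. For $\delta>0$, $\Omega_\delta=\{\boldsymbol{x}\in\Omega:\operatorname{dist}(\boldsymbol{x},\partial\Omega)>\delta\}$. Topological limits: for sets $E_n\subset\mathbb{R}^m$, the superior topological limit $\overline{\lim}^T E_n$ is the set of $\boldsymbol{x}$ such that there exist a subsequence $n_k$ and $\boldsymbol{x}_{n_k}\in E_{n_k}$ with $\boldsymbol{x}_{n_k}\to\boldsymbol{x}$; the inferior topological limit $\underline{\lim}^T E_n$ is the set of $\boldsymbol{x}$ such that there exist $\boldsymbol{x}_n\in E_n$ (for all large $n$) with $\boldsymbol{x}_n\to\boldsymbol{x}$; if these coincide, the common set is the topological limit $\lim^T E_n$. *)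

theory Defs
  imports "HOL-Analysis.Analysis"
begin

text \<open>W^+(U): convex real-valued functions on the open convex set U.
  (Functions are total in HOL; only their values on U matter.)\<close>
definition Wplus :: "'a::euclidean_space set \<Rightarrow> ('a \<Rightarrow> real) set" where
  "Wplus U = {v. convex_on U v}"

definition inner_dom :: "'a::euclidean_space set \<Rightarrow> real \<Rightarrow> 'a set" where
  "inner_dom \<Omega> \<delta> = {x \<in> \<Omega>. infdist x (frontier \<Omega>) > \<delta>}"

definition border :: "('a::euclidean_space \<Rightarrow> real) \<Rightarrow> 'a set \<Rightarrow> 'a \<Rightarrow> ereal" where
  "border v U y = Liminf (at y within U) (\<lambda>x. ereal (v x))"

definition upper_top_lim :: "(nat \<Rightarrow> 'b::metric_space set) \<Rightarrow> 'b set" where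
  "upper_top_lim E = {x. \<exists>r xs. strict_mono r \<and> (\<forall>k. xs k \<in> E (r k)) \<and> xs \<longlonglongrightarrow> x}"

definition lower_top_lim :: "(nat \<Rightarrow> 'b::metric_space set) \<Rightarrow> 'b set" where
  "lower_top_lim E = {x. \<exists>xs. (\<forall>\<^sub>F n in sequentially. xs n \<in> E n) \<and> xs \<longlonglongrightarrow> x}"

definition has_top_limit :: "(nat \<Rightarrow> 'b::metric_space set) \<Rightarrow> 'b set \<Rightarrow> bool" where
  "has_top_limit E S \<longleftrightarrow> upper_top_lim E = S \<and> lower_top_lim E = S"

end

theory Submission
  imports Defs
begin

text \<open>Fix a boundary point \<open>x\<close> and an interior point \<open>z\<close> of \<open>\<Omega>\<close>. Since \<open>v\<^sub>n \<rightarrow> v\<^sub>0\<close> at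
  the finitely many vertices of a small cube around \<open>z\<close>, convexity bounds the \<open>v\<^sub>n\<close>
  uniformly by some \<open>A\<close> on a ball around \<open>z\<close> for large \<open>n\<close>. The topological limit of the
  graphs gives boundary points \<open>y\<^sub>n \<in> \<partial>\<Omega>\<^sub>n\<close> with \<open>y\<^sub>n \<rightarrow> x\<close> and \<open>b\<^sub>n(y\<^sub>n) \<rightarrow> bt(x)\<close>, and
  hence points \<open>q\<^sub>n \<in> \<Omega>\<^sub>n\<close> near \<open>y\<^sub>n\<close> with \<open>v\<^sub>n(q\<^sub>n) < b\<^sub>n(y\<^sub>n) + \<epsilon>\<close>. Convexity of \<open>v\<^sub>n\<close> along
  segments from the ball to \<open>q\<^sub>n\<close> gives, in the limit, \<open>v\<^sub>0((1-t)z + tx) \<le> (1-t)A + t(bt(x)+\<epsilon>)\<close>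
  for \<open>0 < t < 1\<close>; letting \<open>t \<rightarrow> 1\<close> bounds the liminf \<open>b\<^sub>0(x)\<close>.\<close>

lemma ball_subset_inner_dom:
  fixes \<Omega> :: "'a::euclidean_space set"
  assumes "open \<Omega>" "z \<in> \<Omega>" "frontier \<Omega> \<noteq> {}"
  obtains e where "e > 0" "ball z e \<subseteq> inner_dom \<Omega> e"
proof -
  define r where "r = infdist z (frontier \<Omega>)"
  have "z \<notin> frontier \<Omega>"
    using assms(1,2) by (simp add: frontier_def interior_open)
  then have "r > 0"
    unfolding r_def using assms(3) by (simp add: infdist_pos_not_in_closed)
  obtain e0 where "e0 > 0" "ball z e0 \<subseteq> \<Omega>"
    using assms(1,2) open_contains_ball by blast
  define e where "e = min e0 (r / 2)"
  have "ball z e \<subseteq> inner_dom \<Omega> e"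
  proof
    fix p assume p: "p \<in> ball z e"
    have "r \<le> infdist p (frontier \<Omega>) + dist z p"
      unfolding r_def by (rule infdist_triangle)
    moreover have "dist z p < r / 2"
      using p by (simp add: e_def)
    ultimately have "e < infdist p (frontier \<Omega>)"
      unfolding e_def by linarith
    moreover have "p \<in> \<Omega>"
      using p \<open>ball z e0 \<subseteq> \<Omega>\<close> by (auto simp: e_def)
    ultimately show "p \<in> inner_dom \<Omega> e"
      by (simp add: inner_dom_def)
  qed
  moreover have "e > 0"
    using \<open>e0 > 0\<close> \<open>r > 0\<close> by (simp add: e_def)
  ultimately show thesis
    using that by blast
qed

lemma open_contains_convex_hull_finite:
  fixes z :: "'a::euclidean_space"
  assumes "open A" "z \<in> A"
  obtains c d where "finite c" "convex hull c \<subseteq> A" "d > 0" "cball z d \<subseteq> convex hull c"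
proof -
  obtain a b where ab: "cbox a b \<subseteq> A" "z \<in> box a b" "\<forall>i\<in>Basis. a \<bullet> i < b \<bullet> i"
    by (rule open_contains_cbox[OF assms])
  obtain c where c: "finite c" "cbox a b = convex hull c"
    by (rule closed_interval_as_convex_hull)
  obtain d where d: "d > 0" "cball z d \<subseteq> box a b"
    using open_box[of a b] ab(2) unfolding open_contains_cball by blast
  have "cball z d \<subseteq> convex hull c"
    using d(2) box_subset_cbox[of a b] unfolding c(2) by (rule subset_trans)
  moreover have "convex hull c \<subseteq> A"
    using ab(1) unfolding c(2) .
  ultimately show thesis
    using that c(1) d(1) by blast
qed

lemma eventually_convex_hull_le:
  fixes f :: "nat \<Rightarrow> 'a::real_vector \<Rightarrow> real"
  assumes "finite c"
    and "\<forall>\<^sub>F n in sequentially. convex hull c \<subseteq> U n"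
    and "\<And>n. convex_on (U n) (f n)"
    and "\<And>w. w \<in> c \<Longrightarrow> (\<lambda>n. f n w) \<longlonglongrightarrow> g w"
    and "\<And>w. w \<in> c \<Longrightarrow> g w < A"
  shows "\<forall>\<^sub>F n in sequentially. \<forall>w\<in>convex hull c. f n w \<le> A"
proof -
  have "\<forall>\<^sub>F n in sequentially. \<forall>w\<in>c. f n w < A"
  proof (rule eventually_ball_finite[OF assms(1)], rule ballI)
    fix w assume "w \<in> c"
    then show "\<forall>\<^sub>F n in sequentially. f n w < A"
      using assms(4,5) order_tendstoD(2) by blast
  qed
  with assms(2) show ?thesis
  proof eventually_elim
    case (elim n)
    have "convex_on (convex hull c) (f n)"
      using convex_on_subset[OF assms(3) elim(1) convex_convex_hull] .
    with elim(2) show ?case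
      using convex_on_convex_hull_bound less_imp_le by blast
  qed
qed

lemma eventually_bounded_near:
  fixes f :: "nat \<Rightarrow> 'a::euclidean_space \<Rightarrow> real"
  assumes "open A" "z \<in> A" "\<forall>\<^sub>F n in sequentially. A \<subseteq> U n"
    and "\<And>n. convex_on (U n) (f n)" "\<And>w. w \<in> A \<Longrightarrow> (\<lambda>n. f n w) \<longlonglongrightarrow> g w"
  obtains d C where "d > 0" "\<forall>\<^sub>F n in sequentially. cball z d \<subseteq> U n \<and> (\<forall>w\<in>cball z d. f n w \<le> C)"
proof -
  obtain c d where c: "finite c" "convex hull c \<subseteq> A" "d > 0" "cball z d \<subseteq> convex hull c"
    using open_contains_convex_hull_finite[OF assms(1,2)] by blast
  have hull: "\<forall>\<^sub>F n in sequentially. convex hull c \<subseteq> U n"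
    using assms(3) by (rule eventually_mono) (use c(2) in blast)
  have "\<forall>\<^sub>F n in sequentially. \<forall>w\<in>convex hull c. f n w \<le> Max (g ` c) + 1"
  proof (rule eventually_convex_hull_le[OF c(1) hull assms(4)])
    fix w assume "w \<in> c"
    then show "(\<lambda>n. f n w) \<longlonglongrightarrow> g w"
      using assms(5) c(2) hull_subset[of c convex] by blast
    have "g w \<le> Max (g ` c)"
      using \<open>w \<in> c\<close> c(1) by (intro Max_ge) auto
    then show "g w < Max (g ` c) + 1"
      by simp
  qed
  with hull have "\<forall>\<^sub>F n in sequentially. cball z d \<subseteq> U n \<and> (\<forall>w\<in>cball z d. f n w \<le> Max (g ` c) + 1)"
    by eventually_elim (use c(4) in blast)
  with c(3) show thesis
    using that by blast
qed

lemma lower_top_lim_graphE: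
  assumes "(x, b) \<in> lower_top_lim (\<lambda>n. {(y, h n y) | y. y \<in> F n})"
  obtains y where "y \<longlonglongrightarrow> x" "(\<lambda>n. h n (y n)) \<longlonglongrightarrow> b" "\<forall>\<^sub>F n in sequentially. y n \<in> F n"
proof -
  obtain xs where xs: "\<forall>\<^sub>F n in sequentially. xs n \<in> {(y, h n y) | y. y \<in> F n}" "xs \<longlonglongrightarrow> (x, b)"
    using assms unfolding lower_top_lim_def by auto
  have "\<forall>\<^sub>F n in sequentially. snd (xs n) = h n (fst (xs n)) \<and> fst (xs n) \<in> F n"
    using xs(1) by eventually_elim auto
  then have graph: "\<forall>\<^sub>F n in sequentially. snd (xs n) = h n (fst (xs n))"
    and "\<forall>\<^sub>F n in sequentially. fst (xs n) \<in> F n"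
    by (auto elim: eventually_mono)
  moreover have "(\<lambda>n. fst (xs n)) \<longlonglongrightarrow> x"
    using tendsto_fst[OF xs(2)] by simp
  moreover have "(\<lambda>n. snd (xs n)) \<longlonglongrightarrow> b"
    using tendsto_snd[OF xs(2)] by simp
  then have "(\<lambda>n. h n (fst (xs n))) \<longlonglongrightarrow> b"
    using graph by (rule Lim_transform_eventually)
  ultimately show thesis
    using that by blast
qed

lemma border_approx:
  fixes f :: "'a::euclidean_space \<Rightarrow> real"
  assumes "\<bar>border f U y\<bar> \<noteq> \<infinity>" "\<rho> > 0" "\<epsilon> > 0"
  shows "\<exists>q\<in>U. dist q y < \<rho> \<and> f q < real_of_ereal (border f U y) + \<epsilon>"
proof (rule ccontr)
  assume far: "\<not> ?thesis"
  define \<beta> where "\<beta> = real_of_ereal (border f U y)"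
  have "\<forall>\<^sub>F q in at y within U. ereal (\<beta> + \<epsilon>) \<le> ereal (f q)"
    unfolding eventually_at using far assms(2) \<beta>_def by (auto intro!: exI[of _ \<rho>] simp: not_less)
  then have "ereal (\<beta> + \<epsilon>) \<le> border f U y"
    unfolding border_def by (rule Liminf_bounded)
  then show False
    using assms(1,3) \<beta>_def by (cases "border f U y") auto
qed

lemma border_approx_sequence:
  fixes f :: "nat \<Rightarrow> 'a::euclidean_space \<Rightarrow> real"
  assumes "y \<longlonglongrightarrow> x" "\<forall>\<^sub>F n in sequentially. \<bar>border (f n) (U n) (y n)\<bar> \<noteq> \<infinity>" "\<epsilon> > 0"
  obtains q where "q \<longlonglongrightarrow> x"
    "\<forall>\<^sub>F n in sequentially. q n \<in> U n \<and> f n (q n) < real_of_ereal (border (f n) (U n) (y n)) + \<epsilon>"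
proof -
  define P where "P n q \<longleftrightarrow> q \<in> U n \<and> dist q (y n) < inverse (real (Suc n))
    \<and> f n q < real_of_ereal (border (f n) (U n) (y n)) + \<epsilon>" for n q
  define q where "q n = (SOME q. P n q)" for n
  have evq: "\<forall>\<^sub>F n in sequentially. P n (q n)"
    using assms(2)
  proof eventually_elim
    case (elim n)
    have "0 < inverse (real (Suc n))"
      by simp
    then have "\<exists>q. P n q"
      unfolding P_def using border_approx[OF elim _ assms(3)] by blast
    then show ?case
      unfolding q_def by (rule someI_ex)
  qed
  have "(\<lambda>n. q n - y n) \<longlonglongrightarrow> 0"
  proof (rule Lim_null_comparison[OF _ LIMSEQ_inverse_real_of_nat])
    show "\<forall>\<^sub>F n in sequentially. norm (q n - y n) \<le> inverse (real (Suc n))"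
      using evq by eventually_elim (simp add: P_def dist_norm)
  qed
  show thesis
  proof (rule that)
    show "q \<longlonglongrightarrow> x"
      using tendsto_add[OF assms(1) \<open>(\<lambda>n. q n - y n) \<longlonglongrightarrow> 0\<close>] by simp
    show "\<forall>\<^sub>F n in sequentially. q n \<in> U n \<and> f n (q n) < real_of_ereal (border (f n) (U n) (y n)) + \<epsilon>"
      using evq by (rule eventually_mono) (simp add: P_def)
  qed
qed

lemma border_leI:
  fixes f :: "'a::euclidean_space \<Rightarrow> real"
  assumes "\<And>r. r > 0 \<Longrightarrow> \<exists>p\<in>U. p \<noteq> x \<and> dist p x < r \<and> f p \<le> C"
  shows "border f U x \<le> ereal C"
  unfolding border_def
proof (rule Liminf_least)
  fix P assume "eventually P (at x within U)"
  then obtain r where r: "r > 0" "\<And>p. p \<in> U \<Longrightarrow> 0 < dist p x \<Longrightarrow> dist p x < r \<Longrightarrow> P p"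
    unfolding eventually_at by auto
  obtain p where p: "p \<in> U" "p \<noteq> x" "dist p x < r" "f p \<le> C"
    using assms[OF r(1)] by auto
  then have "(INF q\<in>Collect P. ereal (f q)) \<le> ereal (f p)"
    using r(2) by (intro INF_lower) auto
  also have "\<dots> \<le> ereal C"
    using p by simp
  finally show "(INF q\<in>Collect P. ereal (f q)) \<le> ereal C" .
qed

text \<open>Write \<open>p = (1-t) z + t x\<close> as \<open>(1-t) z\<^sub>n + t q\<^sub>n\<close> with \<open>z\<^sub>n \<rightarrow> z\<close>; for large \<open>n\<close>
  the point \<open>z\<^sub>n\<close> lies in the ball where \<open>f\<^sub>n \<le> A\<close>, and convexity of \<open>f\<^sub>n\<close> does the rest.\<close>
lemma convex_limit_on_segment_le:
  fixes f :: "nat \<Rightarrow> 'a::real_normed_vector \<Rightarrow> real"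
  assumes convex: "\<And>n. convex_on (U n) (f n)"
    and ball: "d > 0" "\<forall>\<^sub>F n in sequentially. cball z d \<subseteq> U n \<and> (\<forall>w\<in>cball z d. f n w \<le> A)"
    and near: "q \<longlonglongrightarrow> x" "\<forall>\<^sub>F n in sequentially. q n \<in> U n \<and> f n (q n) \<le> B n" "B \<longlonglongrightarrow> b"
    and t: "0 \<le> t" "t < 1"
    and lim: "(\<lambda>n. f n ((1 - t) *\<^sub>R z + t *\<^sub>R x)) \<longlonglongrightarrow> l"
  shows "l \<le> (1 - t) * A + t * b"
proof -
  define p where "p = (1 - t) *\<^sub>R z + t *\<^sub>R x"
  define zz where "zz n = (1 / (1 - t)) *\<^sub>R (p - t *\<^sub>R q n)" for n
  have "zz \<longlonglongrightarrow> (1 / (1 - t)) *\<^sub>R (p - t *\<^sub>R x)"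
    unfolding zz_def by (intro tendsto_intros near(1))
  also have "(1 / (1 - t)) *\<^sub>R (p - t *\<^sub>R x) = z"
    using t by (simp add: p_def)
  finally have "\<forall>\<^sub>F n in sequentially. dist (zz n) z < d"
    using tendstoD ball(1) by blast
  then have "\<forall>\<^sub>F n in sequentially. f n p \<le> (1 - t) * A + t * B n"
    using ball(2) near(2)
  proof eventually_elim
    case (elim n)
    have zz: "zz n \<in> cball z d"
      using elim(1) by (simp add: dist_commute)
    have "(1 - t) *\<^sub>R zz n = p - t *\<^sub>R q n"
      using t by (simp add: zz_def)
    then have "p = (1 - t) *\<^sub>R zz n + t *\<^sub>R q n"
      by (simp add: algebra_simps)
    then have "f n p \<le> (1 - t) * f n (zz n) + t * f n (q n)"
      using convex_onD[OF convex] t zz elim by auto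
    also have "\<dots> \<le> (1 - t) * A + t * B n"
      using t zz elim by (intro add_mono mult_left_mono) auto
    finally show ?case .
  qed
  moreover have "(\<lambda>n. (1 - t) * A + t * B n) \<longlonglongrightarrow> (1 - t) * A + t * b"
    by (intro tendsto_intros near(3))
  ultimately show ?thesis
    using tendsto_le[OF sequentially_bot _ lim] unfolding p_def by blast
qed

lemma segment_to_frontier_in_open:
  fixes \<Omega> :: "'a::euclidean_space set"
  assumes "open \<Omega>" "convex \<Omega>" "z \<in> \<Omega>" "x \<in> frontier \<Omega>" "0 < t" "t < 1"
  shows "(1 - t) *\<^sub>R z + t *\<^sub>R x \<in> \<Omega>"
proof -
  have "x \<in> closure \<Omega>" "x \<notin> \<Omega>"
    using assms(1,4) by (auto simp: frontier_def interior_open)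
  then have "(1 - t) *\<^sub>R z + t *\<^sub>R x \<in> open_segment z x"
    using assms(3,5,6) unfolding in_segment by auto
  then show ?thesis
    using in_interior_closure_convex_segment[OF assms(2) _ \<open>x \<in> closure \<Omega>\<close>] assms(1,3)
    by (auto simp: interior_open)
qed

lemma border_le_of_segment_bound:
  fixes g :: "'a::euclidean_space \<Rightarrow> real"
  assumes "open \<Omega>" "convex \<Omega>" "z \<in> \<Omega>" "x \<in> frontier \<Omega>"
    and seg: "\<And>t. 0 < t \<Longrightarrow> t < 1 \<Longrightarrow> g ((1 - t) *\<^sub>R z + t *\<^sub>R x) \<le> (1 - t) * A + t * b"
  shows "border g \<Omega> x \<le> ereal b"
proof (rule ereal_le_epsilon2)
  fix \<epsilon> :: real assume "\<epsilon> > 0"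
  have "border g \<Omega> x \<le> ereal (b + \<epsilon>)"
  proof (rule border_leI)
    fix r :: real assume "r > 0"
    define s where "s = min (1/2) (min (\<epsilon> / (\<bar>A - b\<bar> + 1)) (r / (dist z x + 1)))"
    have pos: "0 < \<bar>A - b\<bar> + 1" "0 < dist z x + 1"
      using zero_le_dist[of z x] by linarith+
    then have s: "0 < s" "s < 1"
      using \<open>\<epsilon> > 0\<close> \<open>r > 0\<close> by (auto simp: s_def)
    have "s \<le> \<epsilon> / (\<bar>A - b\<bar> + 1)" "s \<le> r / (dist z x + 1)"
      unfolding s_def by auto
    then have "s * (\<bar>A - b\<bar> + 1) \<le> \<epsilon>" "s * (dist z x + 1) \<le> r"
      using pos by (simp_all add: le_divide_eq)
    moreover have "s * (A - b) \<le> s * (\<bar>A - b\<bar> + 1)"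
      using s by (intro mult_left_mono) auto
    ultimately have small: "s * (A - b) \<le> \<epsilon>" "s * dist z x < r"
      using s by (simp_all add: distrib_left)
    define p where "p = s *\<^sub>R z + (1 - s) *\<^sub>R x"
    have "p \<in> \<Omega>"
      unfolding p_def using segment_to_frontier_in_open[OF assms(1-4), of "1 - s"] s by simp
    moreover have "dist p x = s * dist z x"
    proof -
      have "p - x = s *\<^sub>R (z - x)"
        by (simp add: p_def algebra_simps)
      then show ?thesis
        using s by (simp add: dist_norm)
    qed
    moreover have "g p \<le> b + \<epsilon>"
    proof -
      have "g p \<le> s * A + (1 - s) * b"
        using seg[of "1 - s"] s unfolding p_def by simp
      then show ?thesis
        using small(1) by (simp add: algebra_simps)
    qed
    ultimately show "\<exists>p\<in>\<Omega>. p \<noteq> x \<and> dist p x < r \<and> g p \<le> b + \<epsilon>"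
      using assms(1,4) small(2) by (auto simp: frontier_def interior_open)
  qed
  then show "border g \<Omega> x \<le> ereal b + ereal \<epsilon>"
    by simp
qed

lemma border_limit_le:
  fixes f :: "nat \<Rightarrow> 'a::euclidean_space \<Rightarrow> real"
  assumes "open \<Omega>" "convex \<Omega>" "x \<in> frontier \<Omega>" "z \<in> \<Omega>"
    and convex: "\<And>n. convex_on (U n) (f n)"
    and lim: "\<And>p. p \<in> \<Omega> \<Longrightarrow> (\<lambda>n. f n p) \<longlonglongrightarrow> g p"
    and ball: "d > 0" "\<forall>\<^sub>F n in sequentially. cball z d \<subseteq> U n \<and> (\<forall>w\<in>cball z d. f n w \<le> A)"
    and y: "y \<longlonglongrightarrow> x" "\<forall>\<^sub>F n in sequentially. \<bar>border (f n) (U n) (y n)\<bar> \<noteq> \<infinity>"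
      "(\<lambda>n. real_of_ereal (border (f n) (U n) (y n))) \<longlonglongrightarrow> b"
  shows "border g \<Omega> x \<le> ereal b"
proof (rule ereal_le_epsilon2)
  fix \<epsilon> :: real assume "\<epsilon> > 0"
  obtain q where q: "q \<longlonglongrightarrow> x"
    "\<forall>\<^sub>F n in sequentially. q n \<in> U n \<and> f n (q n) < real_of_ereal (border (f n) (U n) (y n)) + \<epsilon>"
    using border_approx_sequence[OF y(1,2) \<open>\<epsilon> > 0\<close>] by blast
  have q_le: "\<forall>\<^sub>F n in sequentially. q n \<in> U n \<and> f n (q n) \<le> real_of_ereal (border (f n) (U n) (y n)) + \<epsilon>"
    using q(2) by (rule eventually_mono) auto
  have "(\<lambda>n. real_of_ereal (border (f n) (U n) (y n)) + \<epsilon>) \<longlonglongrightarrow> b + \<epsilon>"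
    by (intro tendsto_intros y(3))
  note segment = convex_limit_on_segment_le[OF convex ball q(1) q_le this]
  have "border g \<Omega> x \<le> ereal (b + \<epsilon>)"
  proof (rule border_le_of_segment_bound[OF assms(1,2,4,3)])
    fix t :: real assume "0 < t" "t < 1"
    then show "g ((1 - t) *\<^sub>R z + t *\<^sub>R x) \<le> (1 - t) * A + t * (b + \<epsilon>)"
      using segment lim segment_to_frontier_in_open[OF assms(1,2,4,3)] by simp
  qed
  then show "border g \<Omega> x \<le> ereal b + ereal \<epsilon>"
    by simp
qed

theorem mainTheorem8:
  fixes \<Omega> :: "'a::euclidean_space set"
    and \<Omega>n :: "nat \<Rightarrow> 'a set"
    and v :: "nat \<Rightarrow> 'a \<Rightarrow> real"
    and v0 :: "'a \<Rightarrow> real"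
    and bt :: "'a \<Rightarrow> real"
  assumes \<Omega>: "bounded \<Omega>" "open \<Omega>" "convex \<Omega>"
    and \<Omega>n: "\<And>n. open (\<Omega>n n) \<and> convex (\<Omega>n n) \<and> \<Omega>n n \<subseteq> \<Omega>"
    and exh: "\<And>\<delta>. \<delta> > 0 \<Longrightarrow> \<exists>N. \<forall>n\<ge>N. closure (inner_dom \<Omega> \<delta>) \<subseteq> \<Omega>n n \<and> \<Omega>n n \<subseteq> \<Omega>"
    and vW: "\<And>n. v n \<in> Wplus (\<Omega>n n)"
    and v0W: "v0 \<in> Wplus \<Omega>"
    and conv: "\<And>x. x \<in> \<Omega> \<Longrightarrow> (\<lambda>n. v n x) \<longlonglongrightarrow> v0 x"
    and bfin: "\<And>n y. y \<in> frontier (\<Omega>n n) \<Longrightarrow> \<bar>border (v n) (\<Omega>n n) y\<bar> \<noteq> \<infinity>"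
    and bcont: "\<And>n. continuous_on (frontier (\<Omega>n n)) (\<lambda>y. real_of_ereal (border (v n) (\<Omega>n n) y))"
    and btc: "continuous_on (frontier \<Omega>) bt"
    and lim: "has_top_limit
               (\<lambda>n. {(x, real_of_ereal (border (v n) (\<Omega>n n) x)) | x. x \<in> frontier (\<Omega>n n)})
               {(x, bt x) | x. x \<in> frontier \<Omega>}"
  shows "\<forall>x \<in> frontier \<Omega>. border v0 \<Omega> x \<le> ereal (bt x)"
proof
  fix x assume x: "x \<in> frontier \<Omega>"
  have vconv: "convex_on (\<Omega>n n) (v n)" for n
    using vW by (simp add: Wplus_def)
  obtain z where z: "z \<in> \<Omega>"
    using x by (metis all_not_in_conv frontier_empty)
  obtain e where e: "e > 0" "ball z e \<subseteq> inner_dom \<Omega> e"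
    using ball_subset_inner_dom[OF \<Omega>(2) z] x by blast
  obtain N where "\<forall>n\<ge>N. closure (inner_dom \<Omega> e) \<subseteq> \<Omega>n n"
    using exh[OF e(1)] by blast
  then have ball: "\<forall>\<^sub>F n in sequentially. ball z e \<subseteq> \<Omega>n n"
    unfolding eventually_sequentially using e(2) closure_subset by blast
  have "(\<lambda>n. v n w) \<longlonglongrightarrow> v0 w" if "w \<in> ball z e" for w
    using that e(2) conv by (auto simp: inner_dom_def)
  then obtain d C where bound: "d > 0"
    "\<forall>\<^sub>F n in sequentially. cball z d \<subseteq> \<Omega>n n \<and> (\<forall>w\<in>cball z d. v n w \<le> C)"
    by (rule eventually_bounded_near[OF open_ball centre_in_ball[THEN iffD2, OF e(1)] ball vconv])
  have "(x, bt x) \<in> lower_top_lim (\<lambda>n. {(y, real_of_ereal (border (v n) (\<Omega>n n) y)) | y. y \<in> frontier (\<Omega>n n)})"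
    using lim x unfolding has_top_limit_def by blast
  then obtain y where y: "y \<longlonglongrightarrow> x" "(\<lambda>n. real_of_ereal (border (v n) (\<Omega>n n) (y n))) \<longlonglongrightarrow> bt x"
    "\<forall>\<^sub>F n in sequentially. y n \<in> frontier (\<Omega>n n)"
    by (rule lower_top_lim_graphE)
  have "\<forall>\<^sub>F n in sequentially. \<bar>border (v n) (\<Omega>n n) (y n)\<bar> \<noteq> \<infinity>"
    using y(3) by (rule eventually_mono) (rule bfin)
  then show "border v0 \<Omega> x \<le> ereal (bt x)"
    using border_limit_le[OF \<Omega>(2,3) x z vconv conv bound y(1) _ y(2)] by blast
qed

end
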